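(* Let $P_0$ be a policy over a DTD $D$, and let $P_1=(\mathcal A_1,\mathcal F_1)$ and $P_2=(\mathcal A_2,\mathcal F_2)$ be consistent total policies over $D$ that both extend $P_0$ (i.e. $P_0\sqsubseteq P_1$ and $P_0\sqsubseteq P_2$). Then $P_1\wedge P_2=(\mathcal A_1\cap\mathcal A_2,\ \mathcal F_1\cup\mathcal F_2)$ is a consistent total policy that extends $P_0$.
   Context: Let $\mathcal L$ be an infinite set of labels and $\mathsf{str}\notin\mathcal L$ a special symbol. A DTD is a triple $D=(Ele,Rg,rt)$ where $Ele\subseteq\mathcal L$ is finite, $rt\in Ele$ is the root type, and for each $A\in Ele$, $Rg(A)$ is one of: $\mathsf{str}$, $\epsilon$, $B_1,\dots,B_n$ (concatenation), $B_1+\dots+B_n$ (disjunction), or $B_1^*$ (Kleene star), where the $B_i\in Ele$ are pairwise distinct and are called subelement types of $A$. DTDs are non-recursive: the directed graph on $Ele$ with an edge $A\to B$ whenever $B$ is a subelement type of $A$ is acyclic. $\le_D$ denotes the reflexive–transitive closure of the subelement relation. We assume every element type is reachable from the root: $rt\le_D A$ for all $A\in Ele$. An XML tree is $t=(N_t,E_t,\lambda_t,r_t,v_t)$: a finite rooted unordered tree with node set $N_t$, parent–child edge set $E_t$, root $r_t$, labelling $\lambda_t:N_t\to\mathcal L\cup\{\mathsf{str}\}$, and a function $v_t$ assigning a string to each node labelled $\mathsf{str}$. The tree $t$ conforms to $D$ at $A\in Ele$ if $\lambda_t(r_t)=A$, every node is labelled by an element of $Ele\cup\{\mathsf{str}\}$,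 every node labelled $B\in Ele$ has children whose labels, listed in some order, form a word of the language of the regular expression $Rg(B)$ (with $Rg(B)=\mathsf{str}$ meaning a single child labelled $\mathsf{str}$ and $\epsilon$ meaning no children), and every node labelled $\mathsf{str}$ is a leaf with a defined string value. $I_D(A)$ is the set of trees conforming to $D$ at $A$, and $I_D=I_D(rt)$. Trees $t_1,t_2$ are isomorphic, $t_1\equiv t_2$, if there is a bijection $N_{t_1}\to N_{t_2}$ preserving root, edges, labels and string values. Atomic updates on a tree $t$: $\mathsf{insert}(n,t')$ adds the tree $t'$ with its root as a new child of $n$; $\mathsf{delete}(n)$ removes $n$ and all its descendants; $\mathsf{replace}(n,t')$ removes the subtree rooted at $n$ and attaches $t'$ (by its root) as a child of the former parent of $n$; $\mathsf{replace}(n,s)$, for a string $s$, sets the string value of $n$ to $s$. An update is valid on $t$ if $n\in N_t$ and the tree $t'$ (if present) has node set disjoint from $N_t$; $[\![op]\!](t)$ denotes the result. For a sequence, $[\![op_1;\dots;op_k]\!](t)=[\![op_k]\!](\cdots[\![op_1]\!](t)\cdots)$, and the sequence is valid on $t$ if each $op_i$ is valid on the result of $op_1;\dots;op_{i-1}$. Update access types (UATs) are expressions $(A,\mathsf{insert}(B))$, $(A,\mathsf{delete}(B))$, $(A,\mathsf{replace}(B,B'))$ with $B\neq B'$, and $(A,\mathsf{replace}(\mathsf{str},\mathsf{str}))$, with $A\in Ele$; $A$ is the element type of the UAT. Such a UAT is valid for $D$ iff, respectively: $Rg(A)=B^*$; $Rg(A)=B^*$; $Rg(A)=B_1+\dots+B_n$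 with $B,B'\in\{B_1,\dots,B_n\}$, $B\neq B'$; $Rg(A)=\mathsf{str}$. $\mathrm{valid}(D)$ is the set of UATs valid for $D$. An atomic update matches a UAT on $t$ as follows: $\mathsf{insert}(n,t')$ matches $(A,\mathsf{insert}(B))$ if $\lambda_t(n)=A$ and $t'\in I_D(B)$; $\mathsf{delete}(n)$ matches $(A,\mathsf{delete}(B))$ if $\lambda_t(n)=B$ and the parent of $n$ is labelled $A$; $\mathsf{replace}(n,t')$ matches $(A,\mathsf{replace}(B,B'))$ if $\lambda_t(n)=B$, the parent of $n$ is labelled $A$, $t'\in I_D(B')$ and $B\neq B'$; $\mathsf{replace}(n,s)$ matches $(A,\mathsf{replace}(\mathsf{str},\mathsf{str}))$ if $\lambda_t(n)=\mathsf{str}$ and the parent of $n$ is labelled $A$. For a set $S$ of UATs, $[\![S]\!]_t$ is the set of atomic updates matching some element of $S$ on $t$. A sequence $op_1;\dots;op_k$ is allowed on $t$ by $S$ if it is valid on $t$ and $op_i\in[\![S]\!]_{t_{i-1}}$ for all $i$, where $t_0=t$ and $t_i=[\![op_i]\!](t_{i-1})$. A policy over $D$ is a pair $P=(\mathcal A,\mathcal F)$ with $\mathcal A,\mathcal F\subseteq\mathrm{valid}(D)$ and $\mathcal A\cap\mathcal F=\emptyset$ (allowed and forbidden UATs); it is total if $\mathcal A\cup\mathcal F=\mathrm{valid}(D)$ and partial otherwise. $P$ is consistent if there exist no $t\in I_D$, no sequence $op_1;\dots;op_k$ ($k\ge1$) allowed on $t$ by $\mathcal A$, and no $op_0\in[\![\mathcal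 F]\!]_t$ valid on $t$ and non-trivial (i.e. $[\![op_0]\!](t)\not\equiv t$) such that $[\![op_1;\dots;op_k]\!](t)\equiv[\![op_0]\!](t)$. Writing $P=(\mathcal A_P,\mathcal F_P)$, the information ordering is $P\sqsubseteq Q$ iff $\mathcal A_P\subseteq\mathcal A_Q$ and $\mathcal F_P\subseteq\mathcal F_Q$; then $Q$ is said to extend $P$. *)

theory Defs
  imports Main
begin

datatype 'l lab = El 'l | Str

datatype 'l rgx = RStr | REps | RCat "'l list" | RDisj "'l list" | RStar 'l

fun subelems :: "'l rgx \<Rightarrow> 'l set" where
  "subelems RStr = {}"
| "subelems REps = {}"
| "subelems (RCat bs) = set bs"
| "subelems (RDisj bs) = set bs"
| "subelems (RStar b) = {b}"

fun rgx_ok :: "'l rgx \<Rightarrow> bool" where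
  "rgx_ok (RCat bs) = (bs \<noteq> [] \<and> distinct bs)"
| "rgx_ok (RDisj bs) = (bs \<noteq> [] \<and> distinct bs)"
| "rgx_ok _ = True"

fun word_ok :: "'l rgx \<Rightarrow> 'l lab list \<Rightarrow> bool" where
  "word_ok RStr w = (w = [Str])"
| "word_ok REps w = (w = [])"
| "word_ok (RCat bs) w = (w = map El bs)"
| "word_ok (RDisj bs) w = (\<exists>b\<in>set bs. w = [El b])"
| "word_ok (RStar b) w = (\<forall>x\<in>set w. x = El b)"

record 'l dtd =
  ele :: "'l set"
  rg :: "'l \<Rightarrow> 'l rgx"
  rt :: 'l

definition sub_rel :: "'l dtd \<Rightarrow> ('l \<times> 'l) set" where
  "sub_rel D = {(A, B). A \<in> ele D \<and> B \<in> subelems (rg D A)}"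

definition wf_dtd :: "'l dtd \<Rightarrow> bool" where
  "wf_dtd D \<longleftrightarrow> finite (ele D) \<and> rt D \<in> ele D
     \<and> (\<forall>A\<in>ele D. subelems (rg D A) \<subseteq> ele D \<and> rgx_ok (rg D A))
     \<and> acyclic (sub_rel D)
     \<and> (\<forall>A\<in>ele D. (rt D, A) \<in> (sub_rel D)\<^sup>*)"

record 'l xtree =
  nodes :: "nat set"
  edges :: "(nat \<times> nat) set"
  lab :: "nat \<Rightarrow> 'l lab"
  root :: nat
  val :: "nat \<Rightarrow> string"

definition wf_tree :: "'l xtree \<Rightarrow> bool" where
  "wf_tree t \<longleftrightarrow> finite (nodes t) \<and> root t \<in> nodes t \<and> edges t \<subseteq> nodes t \<times> nodes t
     \<and> (\<forall>p. (p, root t) \<notin> edges t)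
     \<and> (\<forall>n\<in>nodes t. n \<noteq> root t \<longrightarrow> (\<exists>!p. (p, n) \<in> edges t))
     \<and> (\<forall>n\<in>nodes t. (root t, n) \<in> (edges t)\<^sup>*)"

definition children :: "'l xtree \<Rightarrow> nat \<Rightarrow> nat set" where
  "children t n = {c. (n, c) \<in> edges t}"

definition parent :: "'l xtree \<Rightarrow> nat \<Rightarrow> nat" where
  "parent t n = (THE p. (p, n) \<in> edges t)"

definition has_parent_lab :: "'l xtree \<Rightarrow> nat \<Rightarrow> 'l \<Rightarrow> bool" where
  "has_parent_lab t n A \<longleftrightarrow> (\<exists>p. (p, n) \<in> edges t \<and> lab t p = El A)"

definition conforms :: "'l dtd \<Rightarrow> 'l xtree \<Rightarrow> 'l \<Rightarrow> bool" where
  "conforms D t A \<longleftrightarrow> wf_tree t \<and> lab t (root t) = El A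
     \<and> (\<forall>x\<in>nodes t. lab t x \<in> El ` ele D \<union> {Str})
     \<and> (\<forall>x\<in>nodes t. \<forall>B. lab t x = El B \<longrightarrow>
          (\<exists>ws. distinct ws \<and> set ws = children t x \<and> word_ok (rg D B) (map (lab t) ws)))
     \<and> (\<forall>x\<in>nodes t. lab t x = Str \<longrightarrow> children t x = {})"

definition inst :: "'l dtd \<Rightarrow> 'l \<Rightarrow> 'l xtree set" where
  "inst D A = {t. conforms D t A}"

abbreviation instD :: "'l dtd \<Rightarrow> 'l xtree set" where
  "instD D \<equiv> inst D (rt D)"

text \<open>Isomorphism (string values compared on str-labelled nodes, where they are defined).\<close>
definition iso :: "'l xtree \<Rightarrow> 'l xtree \<Rightarrow> bool" where
  "iso t1 t2 \<longleftrightarrow> (\<exists>f. bij_betw f (nodes t1) (nodes t2) \<and> f (root t1) = root t2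
     \<and> (\<forall>x\<in>nodes t1. \<forall>y\<in>nodes t1. (x, y) \<in> edges t1 \<longleftrightarrow> (f x, f y) \<in> edges t2)
     \<and> (\<forall>x\<in>nodes t1. lab t2 (f x) = lab t1 x)
     \<and> (\<forall>x\<in>nodes t1. lab t1 x = Str \<longrightarrow> val t2 (f x) = val t1 x))"

datatype 'l update =
    Insert nat "'l xtree"
  | Delete nat
  | ReplaceT nat "'l xtree"
  | ReplaceS nat string

definition ins_tree :: "nat \<Rightarrow> 'l xtree \<Rightarrow> 'l xtree \<Rightarrow> 'l xtree" where
  "ins_tree n t' t = t\<lparr> nodes := nodes t \<union> nodes t',
      edges := edges t \<union> edges t' \<union> {(n, root t')},
      lab := (\<lambda>x. if x \<in> nodes t' then lab t' x else lab t x),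
      val := (\<lambda>x. if x \<in> nodes t' then val t' x else val t x) \<rparr>"

definition del_tree :: "nat \<Rightarrow> 'l xtree \<Rightarrow> 'l xtree" where
  "del_tree n t = (let R = {m. (n, m) \<in> (edges t)\<^sup>*}; N = nodes t - R in
      t\<lparr> nodes := N, edges := edges t \<inter> (N \<times> N) \<rparr>)"

fun apply_up :: "'l update \<Rightarrow> 'l xtree \<Rightarrow> 'l xtree" where
  "apply_up (Insert n t') t = ins_tree n t' t"
| "apply_up (Delete n) t = del_tree n t"
| "apply_up (ReplaceT n t') t = ins_tree (parent t n) t' (del_tree n t)"
| "apply_up (ReplaceS n s) t = t\<lparr> val := (val t)(n := s) \<rparr>"

fun valid_up :: "'l update \<Rightarrow> 'l xtree \<Rightarrow> bool" where
  "valid_up (Insert n t') t = (n \<in> nodes t \<and> nodes t' \<inter> nodes t = {})"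
| "valid_up (Delete n) t = (n \<in> nodes t)"
| "valid_up (ReplaceT n t') t = (n \<in> nodes t \<and> nodes t' \<inter> nodes t = {})"
| "valid_up (ReplaceS n s) t = (n \<in> nodes t)"

datatype 'l uat =
    UInsert 'l 'l
  | UDelete 'l 'l
  | UReplace 'l 'l 'l
  | UReplaceStr 'l

fun valid_uat :: "'l dtd \<Rightarrow> 'l uat \<Rightarrow> bool" where
  "valid_uat D (UInsert A B) = (A \<in> ele D \<and> rg D A = RStar B)"
| "valid_uat D (UDelete A B) = (A \<in> ele D \<and> rg D A = RStar B)"
| "valid_uat D (UReplace A B B') = (A \<in> ele D \<and> B \<noteq> B' \<and>
      (\<exists>bs. rg D A = RDisj bs \<and> B \<in> set bs \<and> B' \<in> set bs))"
| "valid_uat D (UReplaceStr A) = (A \<in> ele D \<and> rg D A = RStr)"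

definition valid_set :: "'l dtd \<Rightarrow> 'l uat set" where
  "valid_set D = {u. valid_uat D u}"

fun matches :: "'l dtd \<Rightarrow> 'l xtree \<Rightarrow> 'l update \<Rightarrow> 'l uat \<Rightarrow> bool" where
  "matches D t (Insert n t') (UInsert A B) = (lab t n = El A \<and> t' \<in> inst D B)"
| "matches D t (Delete n) (UDelete A B) = (lab t n = El B \<and> has_parent_lab t n A)"
| "matches D t (ReplaceT n t') (UReplace A B B') =
     (lab t n = El B \<and> has_parent_lab t n A \<and> t' \<in> inst D B' \<and> B \<noteq> B')"
| "matches D t (ReplaceS n s) (UReplaceStr A) = (lab t n = Str \<and> has_parent_lab t n A)"
| "matches D t _ _ = False"

definition matching :: "'l dtd \<Rightarrow> 'l uat set \<Rightarrow> 'l xtree \<Rightarrow> 'l update set" where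
  "matching D S t = {op. \<exists>u\<in>S. matches D t op u}"

fun apply_seq :: "'l update list \<Rightarrow> 'l xtree \<Rightarrow> 'l xtree" where
  "apply_seq [] t = t"
| "apply_seq (op # ops) t = apply_seq ops (apply_up op t)"

fun allowed :: "'l dtd \<Rightarrow> 'l uat set \<Rightarrow> 'l xtree \<Rightarrow> 'l update list \<Rightarrow> bool" where
  "allowed D S t [] = True"
| "allowed D S t (op # ops) =
     (valid_up op t \<and> op \<in> matching D S t \<and> allowed D S (apply_up op t) ops)"

type_synonym 'l policy = "'l uat set \<times> 'l uat set"

definition is_policy :: "'l dtd \<Rightarrow> 'l policy \<Rightarrow> bool" where
  "is_policy D P \<longleftrightarrow> fst P \<subseteq> valid_set D \<and> snd P \<subseteq> valid_set D \<and> fst P \<inter> snd P = {}"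

definition total :: "'l dtd \<Rightarrow> 'l policy \<Rightarrow> bool" where
  "total D P \<longleftrightarrow> fst P \<union> snd P = valid_set D"

definition consistent :: "'l dtd \<Rightarrow> 'l policy \<Rightarrow> bool" where
  "consistent D P \<longleftrightarrow> \<not> (\<exists>t\<in>instD D. \<exists>ops op0.
      ops \<noteq> [] \<and> allowed D (fst P) t ops \<and>
      op0 \<in> matching D (snd P) t \<and> valid_up op0 t \<and> \<not> iso (apply_up op0 t) t \<and>
      iso (apply_seq ops t) (apply_up op0 t))"

definition extends :: "'l policy \<Rightarrow> 'l policy \<Rightarrow> bool" (infix "\<sqsubseteq>" 50) where
  "P \<sqsubseteq> Q \<longleftrightarrow> fst P \<subseteq> fst Q \<and> snd P \<subseteq> snd Q"

definition meet :: "'l policy \<Rightarrow> 'l policy \<Rightarrow> 'l policy" where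
  "meet P Q = (fst P \<inter> fst Q, snd P \<union> snd Q)"

end

theory Submission
  imports Defs
begin

(* Each of the four claimed properties of the meet holds for a separate, elementary reason:
   - it is a policy, since A1 \<inter> A2 avoids F1 (inside A1) and F2 (inside A2);
   - it is total when both arguments are, since every valid UAT not forbidden by either
     policy is allowed by both;
   - it extends every common lower bound P0 of P1 and P2;
   - it is consistent when both arguments are: a violating update sequence allowed by
     A1 \<inter> A2 is allowed by A1 and by A2 (allowedness is monotone in the allowed set), and
     the competing forbidden update matches F1 or F2, contradicting consistency of P1 or P2. *)

lemma allowed_mono:
  assumes "allowed D S t ops" and "S \<subseteq> S'"
  shows "allowed D S' t ops"
  using assms by (induction ops arbitrary: t) (auto simp: matching_def)

lemma matching_Un: "matching D (S \<union> S') t = matching D S t \<union> matching D S' t"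
  by (auto simp: matching_def)

definition violates :: "'l dtd \<Rightarrow> 'l uat set \<Rightarrow> 'l uat set \<Rightarrow> bool" where
  "violates D A F \<longleftrightarrow> (\<exists>t\<in>instD D. \<exists>ops op0.
      ops \<noteq> [] \<and> allowed D A t ops \<and>
      op0 \<in> matching D F t \<and> valid_up op0 t \<and> \<not> iso (apply_up op0 t) t \<and>
      iso (apply_seq ops t) (apply_up op0 t))"

lemma consistent_iff_not_violates: "consistent D P \<longleftrightarrow> \<not> violates D (fst P) (snd P)"
  by (simp add: consistent_def violates_def)

lemma violates_mono:
  assumes "violates D A F" and "A \<subseteq> A'" and "F \<subseteq> F'"
  shows "violates D A' F'"
  using assms allowed_mono unfolding violates_def matching_def by blast

lemma violates_Un:
  assumes "violates D A (F \<union> F')"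
  shows "violates D A F \<or> violates D A F'"
  using assms unfolding violates_def matching_Un by blast

lemma consistent_meet:
  assumes "consistent D P1" and "consistent D P2"
  shows "consistent D (meet P1 P2)"
proof -
  let ?A = "fst P1 \<inter> fst P2"
  have no_viol_F1: "\<not> violates D ?A (snd P1)"
    using assms(1) violates_mono[of D ?A "snd P1" "fst P1"]
    by (auto simp: consistent_iff_not_violates)
  have no_viol_F2: "\<not> violates D ?A (snd P2)"
    using assms(2) violates_mono[of D ?A "snd P2" "fst P2"]
    by (auto simp: consistent_iff_not_violates)
  have "\<not> violates D ?A (snd P1 \<union> snd P2)"
    using violates_Un no_viol_F1 no_viol_F2 by blast
  then show ?thesis
    by (simp add: consistent_iff_not_violates meet_def)
qed

lemma is_policy_meet:
  assumes "is_policy D P1" and "is_policy D P2"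
  shows "is_policy D (meet P1 P2)"
  using assms by (auto simp: is_policy_def meet_def)

lemma total_meet:
  assumes "is_policy D P1" "total D P1" and "is_policy D P2" "total D P2"
  shows "total D (meet P1 P2)"
  using assms by (auto simp: is_policy_def total_def meet_def)

lemma extends_meet:
  assumes "P0 \<sqsubseteq> P1" and "P0 \<sqsubseteq> P2"
  shows "P0 \<sqsubseteq> meet P1 P2"
  using assms by (auto simp: extends_def meet_def)

theorem lemma1:
  fixes D :: "'l dtd" and P0 P1 P2 :: "'l policy"
  assumes "infinite (UNIV :: 'l set)"
    and "wf_dtd D"
    and "is_policy D P0"
    and "is_policy D P1" and "total D P1" and "consistent D P1"
    and "is_policy D P2" and "total D P2" and "consistent D P2"
    and "P0 \<sqsubseteq> P1" and "P0 \<sqsubseteq> P2"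
  shows "is_policy D (meet P1 P2) \<and> total D (meet P1 P2) \<and> consistent D (meet P1 P2)
         \<and> P0 \<sqsubseteq> meet P1 P2"
  using is_policy_meet[OF assms(4,7)] total_meet[OF assms(4,5,7,8)]
    consistent_meet[OF assms(6,9)] extends_meet[OF assms(10,11)]
  by blast

end
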